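(* Let $\Omega$ be a domain in $\mathscr H$ and $\alpha\in\{0,1\}$. Then: (1) $d_0^2=d_1^2=0$ on $C_0^\infty(\Omega,\wedge^p\mathbb C^{2n})$; (2) $d_0d_1=-d_1d_0$; (3) for $F\in C_0^\infty(\Omega,\wedge^p\mathbb C^{2n})$ and $G\in C_0^\infty(\Omega,\wedge^q\mathbb C^{2n})$, $d_\alpha(F\wedge G)=d_\alpha F\wedge G+(-1)^pF\wedge d_\alpha G$.
   Context: $\mathscr H=\mathbb R^{4n}\times\mathbb R$ with product $(x,t)\cdot(y,s)=\big(x+y,\,t+s+2\sum_{l=1}^{2n}(x_{2l-1}y_{2l}-x_{2l}y_{2l-1})\big)$ and vector fields $X_{2l-1}=\partial_{x_{2l-1}}-2x_{2l}\partial_t$, $X_{2l}=\partial_{x_{2l}}+2x_{2l-1}\partial_t$ ($l=1,\dots,2n$). With $\mathbf i$ the complex imaginary unit, for $l=0,\dots,n-1$ define $Z_{l0'}=X_{4l+1}+\mathbf iX_{4l+2}$, $Z_{l1'}=-X_{4l+3}-\mathbf iX_{4l+4}$, $Z_{(n+l)0'}=X_{4l+3}-\mathbf iX_{4l+4}$, $Z_{(n+l)1'}=X_{4l+1}-\mathbf iX_{4l+2}$. Fix a basis $\omega^0,\dots,\omega^{2n-1}$ of $\mathbb C^{2n}$; for $F=\sum_If_I\omega^I$ ($\omega^I=\omega^{i_1}\wedge\cdots\wedge\omega^{i_p}$) define $d_\alpha F=\sum_I\sum_{A=0}^{2n-1}Z_{A\alpha'}f_I\,\omega^A\wedge\omega^I$,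 $\alpha=0,1$. *)

theory Defs
  imports "HOL-Analysis.Analysis"
begin

text \<open>A point (x,t) of H = R^(4n) x R is encoded as p :: nat => real with
  p 0 = t, p j = x_j for 1 <= j <= 4n, and p j = 0 for j > 4n.
  The type nat => real carries the product topology (Function_Topology);
  on heis_space n this is the Euclidean topology of R^(4n+1).\<close>

definition heis_space :: "nat \<Rightarrow> (nat \<Rightarrow> real) set" where
  "heis_space n = {p. \<forall>j>4*n. p j = 0}"

definition heis_domain :: "nat \<Rightarrow> (nat \<Rightarrow> real) set \<Rightarrow> bool" where
  "heis_domain n \<Omega> \<longleftrightarrow> \<Omega> \<noteq> {} \<and> \<Omega> \<subseteq> heis_space n \<and>
     openin (top_of_set (heis_space n)) \<Omega> \<and> connected \<Omega>"

definition pd :: "nat \<Rightarrow> ((nat \<Rightarrow> real) \<Rightarrow> complex) \<Rightarrow> (nat \<Rightarrow> real) \<Rightarrow> complex" where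
  "pd j f p = vector_derivative (\<lambda>s. f (p(j := s))) (at (p j))"

fun iter_pd :: "nat list \<Rightarrow> ((nat \<Rightarrow> real) \<Rightarrow> complex) \<Rightarrow> (nat \<Rightarrow> real) \<Rightarrow> complex" where
  "iter_pd [] f = f"
| "iter_pd (j # js) f = pd j (iter_pd js f)"

definition smooth_on :: "nat \<Rightarrow> (nat \<Rightarrow> real) set \<Rightarrow> ((nat \<Rightarrow> real) \<Rightarrow> complex) \<Rightarrow> bool" where
  "smooth_on n \<Omega> f \<longleftrightarrow>
     (\<forall>js. set js \<subseteq> {0..4*n} \<longrightarrow>
        continuous_on \<Omega> (iter_pd js f) \<and>
        (\<forall>p\<in>\<Omega>. \<forall>j\<in>{0..4*n}. (\<lambda>s. iter_pd js f (p(j := s))) differentiable (at (p j))))"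

definition compact_support_in :: "(nat \<Rightarrow> real) set \<Rightarrow> ((nat \<Rightarrow> real) \<Rightarrow> complex) \<Rightarrow> bool" where
  "compact_support_in \<Omega> f \<longleftrightarrow>
     compact (closure {p\<in>\<Omega>. f p \<noteq> 0}) \<and> closure {p\<in>\<Omega>. f p \<noteq> 0} \<subseteq> \<Omega>"

definition Xf :: "nat \<Rightarrow> ((nat \<Rightarrow> real) \<Rightarrow> complex) \<Rightarrow> (nat \<Rightarrow> real) \<Rightarrow> complex" where
  "Xf k f p = (if odd k then pd k f p - 2 * complex_of_real (p (k + 1)) * pd 0 f p
               else pd k f p + 2 * complex_of_real (p (k - 1)) * pd 0 f p)"

definition Zf :: "nat \<Rightarrow> nat \<Rightarrow> nat \<Rightarrow> ((nat \<Rightarrow> real) \<Rightarrow> complex) \<Rightarrow> (nat \<Rightarrow> real) \<Rightarrow> complex" where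
  "Zf n A \<alpha> f p =
     (if A < n then
        (if \<alpha> = 0 then Xf (4*A+1) f p + \<i> * Xf (4*A+2) f p
         else - Xf (4*A+3) f p - \<i> * Xf (4*A+4) f p)
      else
        (if \<alpha> = 0 then Xf (4*(A-n)+3) f p - \<i> * Xf (4*(A-n)+4) f p
         else Xf (4*(A-n)+1) f p - \<i> * Xf (4*(A-n)+2) f p))"

text \<open>A form F = sum_I f_I omega^I is encoded by its coefficients: F I is the
  coefficient of omega^I = omega^{i_1} ^ ... ^ omega^{i_p}, with I = {i_1 < ... < i_p}
  a subset of {0..<2n}.\<close>
type_synonym hform = "nat set \<Rightarrow> (nat \<Rightarrow> real) \<Rightarrow> complex"

text \<open>omega^I ^ omega^J = shuffle_sign I J * omega^(I \<union> J) for disjoint I, J.\<close>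
definition shuffle_sign :: "nat set \<Rightarrow> nat set \<Rightarrow> complex" where
  "shuffle_sign I J = (-1) ^ card {(i, j). i \<in> I \<and> j \<in> J \<and> j < i}"

definition wedge :: "hform \<Rightarrow> hform \<Rightarrow> hform" where
  "wedge F G = (\<lambda>K p. \<Sum>I\<in>Pow K. shuffle_sign I (K - I) * F I p * G (K - I) p)"

text \<open>d_alpha F = sum_I sum_A Z_{A alpha'} f_I omega^A ^ omega^I.\<close>
definition dop :: "nat \<Rightarrow> nat \<Rightarrow> hform \<Rightarrow> hform" where
  "dop n \<alpha> F = (\<lambda>K p. if K \<subseteq> {..<2*n} then
       (\<Sum>A\<in>K. shuffle_sign {A} (K - {A}) * Zf n A \<alpha> (F (K - {A})) p) else 0)"

definition smooth_form :: "nat \<Rightarrow> (nat \<Rightarrow> real) set \<Rightarrow> nat \<Rightarrow> hform \<Rightarrow> bool" where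
  "smooth_form n \<Omega> q F \<longleftrightarrow>
     (\<forall>I. \<not> (I \<subseteq> {..<2*n} \<and> card I = q) \<longrightarrow> F I = (\<lambda>_. 0)) \<and>
     (\<forall>I. smooth_on n \<Omega> (F I) \<and> compact_support_in \<Omega> (F I))"

end

theory Submission
  imports Defs
begin

(* Each Z_{A alpha'} is a constant-coefficient combination of two of the fields X_k, and the only
   nonvanishing brackets among the X_k are [X_{2l-1}, X_{2l}] = 4 d/dt.  Hence
   [Z_{A alpha'}, Z_{B beta'}] = -8i eps_{alpha beta} J_{AB} d/dt with eps antisymmetric and J
   symmetric (J_{AB} = 1 iff |A - B| = n), so, by the symmetry of second partial derivatives, the
   operator Z_{A alpha'} Z_{B beta'} + Z_{A beta'} Z_{B alpha'} is symmetric in A and B.  In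
   d_alpha d_beta + d_beta d_alpha it is paired with the sign of omega^A ^ omega^B, which is
   antisymmetric in A and B, so the sum vanishes; alpha = beta gives d_alpha^2 = 0.  The Leibniz
   rule is the product rule for the X_k together with the sign rule for moving omega^A past
   omega^I. *)

definition partial_differentiable :: "nat \<Rightarrow> (nat \<Rightarrow> real) \<Rightarrow> ((nat \<Rightarrow> real) \<Rightarrow> complex) \<Rightarrow> bool" where
  "partial_differentiable j p f \<longleftrightarrow> (\<lambda>s. f (p(j := s))) differentiable (at (p j))"

definition has_partials :: "nat \<Rightarrow> (nat \<Rightarrow> real) \<Rightarrow> ((nat \<Rightarrow> real) \<Rightarrow> complex) \<Rightarrow> bool" where
  "has_partials n p f \<longleftrightarrow> (\<forall>j\<le>4*n. partial_differentiable j p f)"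

lemma has_vector_derivative_pd:
  "partial_differentiable j p f \<Longrightarrow> ((\<lambda>s. f (p(j := s))) has_vector_derivative pd j f p) (at (p j))"
  unfolding partial_differentiable_def pd_def by (simp add: vector_derivative_works[symmetric])

lemma partial_differentiable_add:
  "partial_differentiable j p f \<Longrightarrow> partial_differentiable j p g \<Longrightarrow>
   partial_differentiable j p (\<lambda>q. f q + g q)"
  unfolding partial_differentiable_def by (rule differentiable_add)

lemma partial_differentiable_mult:
  "partial_differentiable j p f \<Longrightarrow> partial_differentiable j p g \<Longrightarrow>
   partial_differentiable j p (\<lambda>q. f q * g q)"
  unfolding partial_differentiable_def by (rule differentiable_mult)

lemma partial_differentiable_const: "partial_differentiable j p (\<lambda>q. c)"
  unfolding partial_differentiable_def by simp

lemma partial_differentiable_cmult: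
  "partial_differentiable j p f \<Longrightarrow> partial_differentiable j p (\<lambda>q. c * f q)"
  by (rule partial_differentiable_mult[OF partial_differentiable_const])

lemma partial_differentiable_sum:
  "finite S \<Longrightarrow> (\<And>i. i \<in> S \<Longrightarrow> partial_differentiable j p (g i)) \<Longrightarrow>
   partial_differentiable j p (\<lambda>q. \<Sum>i\<in>S. g i q)"
  by (induction S rule: finite_induct)
    (auto intro: partial_differentiable_add partial_differentiable_const)

lemma has_vector_derivative_coord:
  "((\<lambda>s. complex_of_real ((p(j := s)) m)) has_vector_derivative (if j = m then 1 else 0)) (at x)"
  by (cases "j = m") (auto intro!: derivative_eq_intros)

lemma partial_differentiable_coord: "partial_differentiable j p (\<lambda>q. complex_of_real (q m))"
  unfolding partial_differentiable_def
  by (rule differentiableI_vector[OF has_vector_derivative_coord])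

lemma pd_add:
  "partial_differentiable j p f \<Longrightarrow> partial_differentiable j p g \<Longrightarrow>
   pd j (\<lambda>q. f q + g q) p = pd j f p + pd j g p"
  unfolding partial_differentiable_def pd_def by simp

lemma pd_mult:
  "partial_differentiable j p f \<Longrightarrow> partial_differentiable j p g \<Longrightarrow>
   pd j (\<lambda>q. f q * g q) p = pd j f p * g p + f p * pd j g p"
  unfolding partial_differentiable_def pd_def by simp

lemma pd_const: "pd j (\<lambda>q. c) p = 0"
  unfolding pd_def by simp

lemma pd_cmult: "partial_differentiable j p f \<Longrightarrow> pd j (\<lambda>q. c * f q) p = c * pd j f p"
  using pd_mult[OF partial_differentiable_const] by (simp add: pd_const)

lemma pd_sum:
  "finite S \<Longrightarrow> (\<And>i. i \<in> S \<Longrightarrow> partial_differentiable j p (g i)) \<Longrightarrow>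
   pd j (\<lambda>q. \<Sum>i\<in>S. g i q) p = (\<Sum>i\<in>S. pd j (g i) p)"
  by (induction S rule: finite_induct) (auto simp: pd_const pd_add partial_differentiable_sum)

lemma pd_coord: "pd j (\<lambda>q. complex_of_real (q m)) p = (if j = m then 1 else 0)"
  unfolding pd_def by (rule vector_derivative_at[OF has_vector_derivative_coord])

lemma has_partials_mult:
  "has_partials n p f \<Longrightarrow> has_partials n p g \<Longrightarrow> has_partials n p (\<lambda>q. f q * g q)"
  unfolding has_partials_def by (blast intro: partial_differentiable_mult)

lemma smooth_on_has_partials:
  "smooth_on n \<Omega> f \<Longrightarrow> p \<in> \<Omega> \<Longrightarrow> set js \<subseteq> {0..4*n} \<Longrightarrow> has_partials n p (iter_pd js f)"
  unfolding smooth_on_def has_partials_def partial_differentiable_def by auto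

lemma smooth_on_continuous_on:
  "smooth_on n \<Omega> f \<Longrightarrow> set js \<subseteq> {0..4*n} \<Longrightarrow> continuous_on \<Omega> (iter_pd js f)"
  unfolding smooth_on_def by blast

lemma norm_diff_le_of_vector_derivative_bound:
  fixes f :: "real \<Rightarrow> 'a::real_normed_vector"
  assumes "a \<le> b"
    and f': "\<And>x. x \<in> {a..b} \<Longrightarrow> (f has_vector_derivative f' x) (at x)"
    and bound: "\<And>x. x \<in> {a..b} \<Longrightarrow> norm (f' x) \<le> B"
  shows "norm (f b - f a) \<le> B * (b - a)"
proof (cases "a = b")
  case False
  have "continuous_on {a..b} f"
    using f' has_vector_derivative_continuous continuous_at_imp_continuous_on by blast
  then have "norm (f b - f a) \<le> B * b - B * a"
    using \<open>a \<le> b\<close> False f' bound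
    by (intro differentiable_bound_general[where f' = f' and \<phi>' = "\<lambda>_. B"])
      (auto intro!: derivative_eq_intros continuous_intros)
  then show ?thesis by (simp add: algebra_simps)
qed simp

lemma second_difference_estimate:
  fixes g gs gsr :: "real \<Rightarrow> real \<Rightarrow> 'a::real_normed_vector"
  assumes "0 \<le> h"
    and gs: "\<And>s r. s \<in> {a..a+h} \<Longrightarrow> r \<in> {b..b+h} \<Longrightarrow>
               ((\<lambda>s. g s r) has_vector_derivative gs s r) (at s)"
    and gsr: "\<And>s r. s \<in> {a..a+h} \<Longrightarrow> r \<in> {b..b+h} \<Longrightarrow>
               ((\<lambda>r. gs s r) has_vector_derivative gsr s r) (at r)"
    and bound: "\<And>s r. s \<in> {a..a+h} \<Longrightarrow> r \<in> {b..b+h} \<Longrightarrow> norm (gsr s r - c) \<le> e"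
  shows "norm (g (a+h) (b+h) - g (a+h) b - g a (b+h) + g a b - (h * h) *\<^sub>R c) \<le> e * h * h"
proof -
  have inner: "norm (gs s (b+h) - gs s b - h *\<^sub>R c) \<le> e * h" if s: "s \<in> {a..a+h}" for s
  proof -
    have "norm ((gs s (b+h) - (b+h) *\<^sub>R c) - (gs s b - b *\<^sub>R c)) \<le> e * ((b+h) - b)"
      using \<open>0 \<le> h\<close> gsr[OF s] bound[OF s]
      by (intro norm_diff_le_of_vector_derivative_bound[where f' = "\<lambda>r. gsr s r - c"])
        (auto intro!: derivative_eq_intros)
    then show ?thesis by (simp add: algebra_simps)
  qed
  have "norm ((g (a+h) (b+h) - g (a+h) b - (a+h) *\<^sub>R h *\<^sub>R c) - (g a (b+h) - g a b - a *\<^sub>R h *\<^sub>R c))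
        \<le> (e * h) * ((a+h) - a)"
    using \<open>0 \<le> h\<close> gs inner
    by (intro norm_diff_le_of_vector_derivative_bound[where f' = "\<lambda>s. gs s (b+h) - gs s b - h *\<^sub>R c"])
      (auto intro!: derivative_eq_intros)
  then show ?thesis by (simp add: algebra_simps)
qed

lemma mixed_partials_close_on_square:
  fixes g :: "real \<Rightarrow> real \<Rightarrow> 'a::real_normed_vector"
  assumes "0 < h"
    and square: "\<And>s r. s \<in> {a..a+h} \<Longrightarrow> r \<in> {b..b+h} \<Longrightarrow>
      ((\<lambda>s. g s r) has_vector_derivative gs s r) (at s) \<and>
      ((\<lambda>r. g s r) has_vector_derivative gr s r) (at r) \<and>
      ((\<lambda>r. gs s r) has_vector_derivative gsr s r) (at r) \<and>
      ((\<lambda>s. gr s r) has_vector_derivative grs s r) (at s) \<and>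
      norm (gsr s r - c) \<le> e \<and> norm (grs s r - c') \<le> e"
  shows "norm (c - c') \<le> 2 * e"
proof -
  define \<Delta> where "\<Delta> = g (a+h) (b+h) - g (a+h) b - g a (b+h) + g a b"
  have "norm (\<Delta> - (h * h) *\<^sub>R c) \<le> e * h * h"
    unfolding \<Delta>_def using \<open>0 < h\<close> square
    by (intro second_difference_estimate[where gs = gs and gsr = gsr]) auto
  moreover have "norm (\<Delta> - (h * h) *\<^sub>R c') \<le> e * h * h"
  proof -
    have "norm (g (a+h) (b+h) - g a (b+h) - g (a+h) b + g a b - (h * h) *\<^sub>R c') \<le> e * h * h"
      using \<open>0 < h\<close> square
      by (intro second_difference_estimate[where g = "\<lambda>r s. g s r" and gs = "\<lambda>r s. gr s r"
            and gsr = "\<lambda>r s. grs s r"]) auto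
    then show ?thesis by (simp add: \<Delta>_def algebra_simps)
  qed
  ultimately have "norm ((h * h) *\<^sub>R (c - c')) \<le> (h * h) * (2 * e)"
    using norm_triangle_le_diff[of "\<Delta> - (h * h) *\<^sub>R c'" "\<Delta> - (h * h) *\<^sub>R c"]
    by (simp add: algebra_simps)
  then show ?thesis using \<open>0 < h\<close> by simp
qed

lemma mixed_partials_commute:
  fixes g :: "real \<Rightarrow> real \<Rightarrow> 'a::real_normed_vector"
  assumes S: "open S" "(a, b) \<in> S"
    and gs: "\<And>s r. (s, r) \<in> S \<Longrightarrow> ((\<lambda>s. g s r) has_vector_derivative gs s r) (at s)"
    and gr: "\<And>s r. (s, r) \<in> S \<Longrightarrow> ((\<lambda>r. g s r) has_vector_derivative gr s r) (at r)"
    and gsr: "\<And>s r. (s, r) \<in> S \<Longrightarrow> ((\<lambda>r. gs s r) has_vector_derivative gsr s r) (at r)"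
    and grs: "\<And>s r. (s, r) \<in> S \<Longrightarrow> ((\<lambda>s. gr s r) has_vector_derivative grs s r) (at s)"
    and cont: "isCont (\<lambda>z. gsr (fst z) (snd z)) (a, b)" "isCont (\<lambda>z. grs (fst z) (snd z)) (a, b)"
  shows "gsr a b = grs a b"
proof -
  have bound: "norm (gsr a b - grs a b) \<le> 2 * e" if "e > 0" for e
  proof -
    obtain d0 where d0: "d0 > 0" "ball (a, b) d0 \<subseteq> S"
      using S open_contains_ball by blast
    obtain d1 where d1: "d1 > 0" "\<forall>z. dist z (a, b) < d1 \<longrightarrow> dist (gsr (fst z) (snd z)) (gsr a b) < e"
      using cont(1) \<open>e > 0\<close> unfolding continuous_at_eps_delta by fastforce
    obtain d2 where d2: "d2 > 0" "\<forall>z. dist z (a, b) < d2 \<longrightarrow> dist (grs (fst z) (snd z)) (grs a b) < e"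
      using cont(2) \<open>e > 0\<close> unfolding continuous_at_eps_delta by fastforce
    define h where "h = min d0 (min d1 d2) / 3"
    have h: "h > 0" "3 * h \<le> d0" "3 * h \<le> d1" "3 * h \<le> d2"
      using d0 d1 d2 by (auto simp: h_def)
    have near: "dist (s, r) (a, b) < min d0 (min d1 d2)" if "s \<in> {a..a+h}" "r \<in> {b..b+h}" for s r
    proof -
      have "dist (s, r) (a, b) = norm (s - a, r - b)" by (simp add: dist_norm)
      also have "\<dots> \<le> norm (s - a) + norm (r - b)" by (rule norm_Pair_le)
      also have "\<dots> < min d0 (min d1 d2)" using that h by auto
      finally show ?thesis .
    qed
    have "(s, r) \<in> S" "norm (gsr s r - gsr a b) \<le> e" "norm (grs s r - grs a b) \<le> e"
      if "s \<in> {a..a+h}" "r \<in> {b..b+h}" for s r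
      using near[OF that] d0(2) d1(2)[rule_format, of "(s, r)"] d2(2)[rule_format, of "(s, r)"]
      by (auto simp: dist_commute dist_norm norm_minus_commute intro: less_imp_le)
    then show ?thesis
      using \<open>h > 0\<close> gs gr gsr grs
      by (intro mixed_partials_close_on_square[where g = g and gs = gs and gr = gr and gsr = gsr
            and grs = grs]) auto
  qed
  have "norm (gsr a b - grs a b) \<le> 0"
    by (rule field_le_epsilon) (use bound[of "_ / 2"] in simp)
  then show ?thesis by simp
qed

lemma continuous_on_plane:
  "continuous_on UNIV (\<lambda>z::real \<times> real. p(k := fst z, l := snd z))"
proof (rule continuous_on_coordinatewise_then_product)
  fix i
  show "continuous_on UNIV (\<lambda>z::real \<times> real. (p(k := fst z, l := snd z)) i)"
    by (cases "i = l"; cases "i = k") (auto intro: continuous_intros)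
qed

lemma open_plane_section:
  assumes "heis_domain n \<Omega>" "p \<in> \<Omega>" "k \<le> 4*n" "l \<le> 4*n"
  shows "open {z. p(k := fst z, l := snd z) \<in> \<Omega>}"
proof -
  obtain U where U: "open U" "\<Omega> = heis_space n \<inter> U"
    using assms(1) unfolding heis_domain_def openin_open by blast
  have "p(k := fst z, l := snd z) \<in> heis_space n" for z
    using assms U unfolding heis_space_def by auto
  then have "{z. p(k := fst z, l := snd z) \<in> \<Omega>} = (\<lambda>z. p(k := fst z, l := snd z)) -` U"
    using U by auto
  then show ?thesis
    using open_vimage[OF U(1) continuous_on_plane] by simp
qed

lemma has_vector_derivative_pd_first:
  "k \<noteq> l \<Longrightarrow> partial_differentiable k (p(k := s, l := r)) f \<Longrightarrow>
   ((\<lambda>s'. f (p(k := s', l := r))) has_vector_derivative pd k f (p(k := s, l := r))) (at s)"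
  using has_vector_derivative_pd[of k "p(k := s, l := r)" f] by (simp add: fun_upd_twist)

lemma has_vector_derivative_pd_second:
  "partial_differentiable l (p(k := s, l := r)) f \<Longrightarrow>
   ((\<lambda>r'. f (p(k := s, l := r'))) has_vector_derivative pd l f (p(k := s, l := r))) (at r)"
  using has_vector_derivative_pd[of l "p(k := s, l := r)" f] by simp

lemma isCont_plane_section:
  assumes "heis_domain n \<Omega>" "p \<in> \<Omega>" "k \<le> 4*n" "l \<le> 4*n" and g: "continuous_on \<Omega> g"
  shows "isCont (\<lambda>z. g (p(k := fst z, l := snd z))) (p k, p l)"
proof -
  define S where "S = {z. p(k := fst z, l := snd z) \<in> \<Omega>}"
  have "continuous_on S (\<lambda>z. p(k := fst z, l := snd z))"
    by (rule continuous_on_subset[OF continuous_on_plane]) simp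
  with g have "continuous_on S (\<lambda>z. g (p(k := fst z, l := snd z)))"
    by (rule continuous_on_compose2) (auto simp: S_def)
  moreover have "open S" "(p k, p l) \<in> S"
    using open_plane_section[OF assms(1-4)] assms(2) by (simp_all add: S_def)
  ultimately show ?thesis
    using continuous_on_eq_continuous_at by blast
qed

lemma pd_commute:
  assumes \<Omega>: "heis_domain n \<Omega>" and f: "smooth_on n \<Omega> f" and p: "p \<in> \<Omega>"
    and kl: "k \<le> 4*n" "l \<le> 4*n"
  shows "pd k (pd l f) p = pd l (pd k f) p"
proof (cases "k = l")
  case False
  define S where "S = {z. p(k := fst z, l := snd z) \<in> \<Omega>}"
  have "pd l (pd k f) (p(k := p k, l := p l)) = pd k (pd l f) (p(k := p k, l := p l))"
  proof (rule mixed_partials_commute[where S = S,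
        where gsr = "\<lambda>s r. pd l (pd k f) (p(k := s, l := r))"
        and grs = "\<lambda>s r. pd k (pd l f) (p(k := s, l := r))"])
    show "open S" "(p k, p l) \<in> S"
      unfolding S_def using open_plane_section[OF \<Omega> p kl] p by simp_all
  next
    fix s r assume "(s, r) \<in> S"
    then have "partial_differentiable j (p(k := s, l := r)) h"
      if "j \<le> 4*n" "h \<in> {f, pd k f, pd l f}" for j h
      using smooth_on_has_partials[OF f, of _ "[]"] smooth_on_has_partials[OF f, of _ "[k]"]
        smooth_on_has_partials[OF f, of _ "[l]"] that kl
      unfolding S_def has_partials_def by auto
    then show
      "((\<lambda>s. f (p(k := s, l := r))) has_vector_derivative pd k f (p(k := s, l := r))) (at s)"
      "((\<lambda>r. f (p(k := s, l := r))) has_vector_derivative pd l f (p(k := s, l := r))) (at r)"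
      "((\<lambda>r. pd k f (p(k := s, l := r))) has_vector_derivative
          pd l (pd k f) (p(k := s, l := r))) (at r)"
      "((\<lambda>s. pd l f (p(k := s, l := r))) has_vector_derivative
          pd k (pd l f) (p(k := s, l := r))) (at s)"
      using False kl
      by (auto intro!: has_vector_derivative_pd_first has_vector_derivative_pd_second)
  next
    have "continuous_on \<Omega> (pd l (pd k f))" "continuous_on \<Omega> (pd k (pd l f))"
      using smooth_on_continuous_on[OF f, of "[l, k]"] smooth_on_continuous_on[OF f, of "[k, l]"] kl
      by simp_all
    then show "isCont (\<lambda>z. pd l (pd k f) (p(k := fst z, l := snd z))) (p k, p l)"
      "isCont (\<lambda>z. pd k (pd l f) (p(k := fst z, l := snd z))) (p k, p l)"
      by (auto intro: isCont_plane_section[OF \<Omega> p kl])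
  qed
  then show ?thesis by simp
qed simp

definition partner :: "nat \<Rightarrow> nat" where
  "partner k = (if odd k then k + 1 else k - 1)"

definition twist :: "nat \<Rightarrow> complex" where
  "twist k = (if odd k then -2 else 2)"

lemma Xf_eq: "Xf k f = (\<lambda>q. pd k f q + twist k * of_real (q (partner k)) * pd 0 f q)"
  unfolding Xf_def twist_def partner_def by (rule ext) auto

lemma partial_differentiable_Xf:
  "partial_differentiable j p (pd k f) \<Longrightarrow> partial_differentiable j p (pd 0 f) \<Longrightarrow>
   partial_differentiable j p (Xf k f)"
  unfolding Xf_eq
  by (intro partial_differentiable_add partial_differentiable_mult partial_differentiable_const
      partial_differentiable_coord)

lemma pd_Xf:
  "partial_differentiable j p (pd k f) \<Longrightarrow> partial_differentiable j p (pd 0 f) \<Longrightarrow>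
   pd j (Xf k f) p = pd j (pd k f) p + twist k * ((if j = partner k then 1 else 0) * pd 0 f p
     + of_real (p (partner k)) * pd j (pd 0 f) p)"
  unfolding Xf_eq
  by (simp add: pd_add pd_mult pd_cmult pd_coord pd_const partial_differentiable_add
      partial_differentiable_mult partial_differentiable_cmult partial_differentiable_coord
      partial_differentiable_const algebra_simps)

lemma has_partials_Xf:
  "has_partials n p (pd k f) \<Longrightarrow> has_partials n p (pd 0 f) \<Longrightarrow> has_partials n p (Xf k f)"
  unfolding has_partials_def by (blast intro: partial_differentiable_Xf)

lemma Xf_sum:
  assumes "finite S" "\<And>i. i \<in> S \<Longrightarrow> has_partials n p (g i)" "k \<le> 4*n"
  shows "Xf k (\<lambda>q. \<Sum>i\<in>S. c i * g i q) p = (\<Sum>i\<in>S. c i * Xf k (g i) p)"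
proof -
  have "pd j (\<lambda>q. \<Sum>i\<in>S. c i * g i q) p = (\<Sum>i\<in>S. c i * pd j (g i) p)" if "j \<le> 4*n" for j
    using assms(1,2) that unfolding has_partials_def
    by (simp add: pd_sum pd_cmult partial_differentiable_cmult)
  then show ?thesis
    unfolding Xf_eq using assms(3) by (simp add: sum.distrib sum_distrib_left algebra_simps)
qed

lemma Xf_mult:
  assumes "has_partials n p f" "has_partials n p g" "k \<le> 4*n"
  shows "Xf k (\<lambda>q. f q * g q) p = Xf k f p * g p + f p * Xf k g p"
proof -
  have "pd j (\<lambda>q. f q * g q) p = pd j f p * g p + f p * pd j g p" if "j \<le> 4*n" for j
    using assms(1,2) that unfolding has_partials_def by (simp add: pd_mult)
  then show ?thesis
    unfolding Xf_eq using assms(3) by (simp add: algebra_simps)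
qed

definition X_bracket :: "nat \<Rightarrow> nat \<Rightarrow> complex" where
  "X_bracket k l = (if odd k \<and> l = k + 1 then 4 else if odd l \<and> k = l + 1 then -4 else 0)"

lemma X_bracket_twist_partner:
  "1 \<le> k \<Longrightarrow> 1 \<le> l \<Longrightarrow>
   twist l * (if k = partner l then 1 else 0) - twist k * (if l = partner k then 1 else 0)
     = X_bracket k l"
  by (auto simp: twist_def partner_def X_bracket_def)

lemma Xf_commutator:
  assumes \<Omega>: "heis_domain n \<Omega>" and f: "smooth_on n \<Omega> f" and p: "p \<in> \<Omega>"
    and k: "1 \<le> k" "k \<le> 4*n" and l: "1 \<le> l" "l \<le> 4*n"
  shows "Xf k (Xf l f) p - Xf l (Xf k f) p = X_bracket k l * pd 0 f p"
proof -
  have partials: "partial_differentiable j p (pd i f)" if "j \<le> 4*n" "i \<le> 4*n" for i j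
    using smooth_on_has_partials[OF f p, of "[i]"] that unfolding has_partials_def by auto
  have Xf_Xf: "Xf a (Xf b f) p = pd a (pd b f) p
      + twist b * ((if a = partner b then 1 else 0) * pd 0 f p
                   + of_real (p (partner b)) * pd a (pd 0 f) p)
      + twist a * of_real (p (partner a))
          * (pd 0 (pd b f) p + twist b * of_real (p (partner b)) * pd 0 (pd 0 f) p)"
    if "a \<le> 4*n" "1 \<le> b" "b \<le> 4*n" for a b
  proof -
    have "partner b \<noteq> 0" using \<open>1 \<le> b\<close> by (auto simp: partner_def)
    then show ?thesis
      using that by (subst Xf_eq) (simp add: pd_Xf partials)
  qed
  have "pd k (pd l f) p = pd l (pd k f) p" "pd k (pd 0 f) p = pd 0 (pd k f) p"
    "pd l (pd 0 f) p = pd 0 (pd l f) p"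
    using k l by (auto intro: pd_commute[OF \<Omega> f p])
  then have "Xf k (Xf l f) p - Xf l (Xf k f) p
      = (twist l * (if k = partner l then 1 else 0) - twist k * (if l = partner k then 1 else 0))
          * pd 0 f p"
    using k l by (simp add: Xf_Xf algebra_simps)
  then show ?thesis using k l by (simp add: X_bracket_twist_partner)
qed

definition Z_index :: "nat \<Rightarrow> nat \<Rightarrow> nat \<Rightarrow> nat" where
  "Z_index n A \<alpha> =
     (if A < n then 4 * A + (if \<alpha> = 0 then 1 else 3) else 4 * (A - n) + (if \<alpha> = 0 then 3 else 1))"

definition Z_coeff :: "nat \<Rightarrow> nat \<Rightarrow> nat \<Rightarrow> nat \<Rightarrow> complex" where
  "Z_coeff n A \<alpha> m =
     (if m = 0 then (if A < n \<and> \<alpha> \<noteq> 0 then -1 else 1) else (if A < n \<and> \<alpha> = 0 then \<i> else -\<i>))"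

lemma Zf_eq: "Zf n A \<alpha> f = (\<lambda>q. \<Sum>m<2. Z_coeff n A \<alpha> m * Xf (Z_index n A \<alpha> + m) f q)"
  by (rule ext) (simp add: Zf_def Z_coeff_def Z_index_def numeral_2_eq_2 ac_simps)

lemma Z_index_bounds: "A < 2*n \<Longrightarrow> 1 \<le> Z_index n A \<alpha> \<and> Z_index n A \<alpha> + 1 \<le> 4*n"
  unfolding Z_index_def by auto

lemma has_partials_Zf:
  assumes "\<And>k. k \<le> 4*n \<Longrightarrow> has_partials n p (pd k f)" "A < 2*n"
  shows "has_partials n p (Zf n A \<alpha> f)"
  using assms Z_index_bounds[OF assms(2), of \<alpha>]
  unfolding Zf_eq has_partials_def
  by (auto intro!: partial_differentiable_sum partial_differentiable_cmult
      partial_differentiable_Xf)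

lemma Zf_sum:
  assumes "finite S" "\<And>i. i \<in> S \<Longrightarrow> has_partials n p (g i)" "A < 2*n"
  shows "Zf n A \<alpha> (\<lambda>q. \<Sum>i\<in>S. c i * g i q) p = (\<Sum>i\<in>S. c i * Zf n A \<alpha> (g i) p)"
  using Z_index_bounds[OF assms(3), of \<alpha>]
  unfolding Zf_eq
  by (simp add: Xf_sum[OF assms(1,2)] sum_distrib_left mult.left_commute sum.swap[of _ S])

lemma Zf_mult:
  assumes "has_partials n p f" "has_partials n p g" "A < 2*n"
  shows "Zf n A \<alpha> (\<lambda>q. f q * g q) p = Zf n A \<alpha> f p * g p + f p * Zf n A \<alpha> g p"
  using Z_index_bounds[OF assms(3), of \<alpha>]
  unfolding Zf_eq
  by (simp add: Xf_mult[OF assms(1,2)] sum.distrib sum_distrib_left sum_distrib_right algebra_simps)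

lemma Zf_Zf:
  assumes "smooth_on n \<Omega> f" "p \<in> \<Omega>" "A < 2*n" "B < 2*n"
  shows "Zf n A \<alpha> (Zf n B \<beta> f) p = (\<Sum>m<2. \<Sum>m'<2. Z_coeff n A \<alpha> m * Z_coeff n B \<beta> m' *
           Xf (Z_index n A \<alpha> + m) (Xf (Z_index n B \<beta> + m') f) p)"
proof -
  have "has_partials n p (Xf (Z_index n B \<beta> + m') f)" if "m' < 2" for m'
    using Z_index_bounds[OF assms(4), of \<beta>] that
    by (intro has_partials_Xf smooth_on_has_partials[OF assms(1,2), of "[_]", simplified]) auto
  then have "Xf k (Zf n B \<beta> f) p
      = (\<Sum>m'<2. Z_coeff n B \<beta> m' * Xf k (Xf (Z_index n B \<beta> + m') f) p)"
    if "k \<le> 4*n" for k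
    unfolding Zf_eq using that by (intro Xf_sum) auto
  then show ?thesis
    using Z_index_bounds[OF assms(3), of \<alpha>]
    by (subst (1) Zf_eq) (simp add: sum_distrib_left mult.assoc)
qed

definition Z_bracket :: "nat \<Rightarrow> nat \<Rightarrow> nat \<Rightarrow> nat \<Rightarrow> nat \<Rightarrow> complex" where
  "Z_bracket n A \<alpha> B \<beta> = -8 * \<i> * (if \<alpha> = \<beta> then 0 else if \<alpha> < \<beta> then 1 else -1) *
     (if A + n = B \<or> B + n = A then 1 else 0)"

lemma Z_bracket_antisym: "Z_bracket n A \<alpha> B \<beta> = - Z_bracket n A \<beta> B \<alpha>"
  unfolding Z_bracket_def by auto

lemma X_bracket_block:
  "i \<in> {1..4} \<Longrightarrow> j \<in> {1..4} \<Longrightarrow>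
   X_bracket (4*a + i) (4*b + j) = (if a = b then X_bracket i j else 0)"
  unfolding X_bracket_def by (auto; presburger)

lemma X_bracket_simps:
  "X_bracket 1 2 = 4" "X_bracket 2 1 = -4" "X_bracket 3 4 = 4" "X_bracket 4 3 = -4"
  "X_bracket 1 1 = 0" "X_bracket 1 3 = 0" "X_bracket 1 4 = 0" "X_bracket 2 2 = 0"
  "X_bracket 2 3 = 0" "X_bracket 2 4 = 0" "X_bracket 3 1 = 0" "X_bracket 3 2 = 0"
  "X_bracket 3 3 = 0" "X_bracket 4 1 = 0" "X_bracket 4 2 = 0" "X_bracket 4 4 = 0"
  by (simp_all add: X_bracket_def)

lemma Z_bracket_eq:
  assumes "A < 2*n" "B < 2*n" "\<alpha> \<in> {0,1}" "\<beta> \<in> {0,1}"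
  shows "(\<Sum>m<2. \<Sum>m'<2. Z_coeff n A \<alpha> m * Z_coeff n B \<beta> m' *
           X_bracket (Z_index n A \<alpha> + m) (Z_index n B \<beta> + m')) = Z_bracket n A \<alpha> B \<beta>"
proof -
  define a where "a = (if A < n then A else A - n)"
  define b where "b = (if B < n then B else B - n)"
  define i where "i = (if (A < n) = (\<alpha> = 0) then 1 else 3 :: nat)"
  define j where "j = (if (B < n) = (\<beta> = 0) then 1 else 3 :: nat)"
  have "Z_index n A \<alpha> = 4 * a + i" "Z_index n B \<beta> = 4 * b + j"
    unfolding Z_index_def a_def b_def i_def j_def by auto
  moreover have
    "X_bracket (4*a + i + m) (4*b + j + m') = (if a = b then X_bracket (i + m) (j + m') else 0)"
    if "m < 2" "m' < 2" for m m'
    using X_bracket_block[of "i + m" "j + m'" a b] that by (auto simp: add.assoc i_def j_def)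
  ultimately have "(\<Sum>m<2. \<Sum>m'<2. Z_coeff n A \<alpha> m * Z_coeff n B \<beta> m' *
           X_bracket (Z_index n A \<alpha> + m) (Z_index n B \<beta> + m'))
      = (if a = b
         then \<Sum>m<2. \<Sum>m'<2. Z_coeff n A \<alpha> m * Z_coeff n B \<beta> m' * X_bracket (i + m) (j + m')
         else 0)"
    by simp
  also have "\<dots> = Z_bracket n A \<alpha> B \<beta>"
  proof -
    have ab: "a = b \<longleftrightarrow> A = B \<or> A + n = B \<or> B + n = A"
      using assms(1,2) unfolding a_def b_def by auto
    have sum2: "(\<Sum>m<2. g m) = g 0 + g 1" for g :: "nat \<Rightarrow> complex"
      by (simp add: numeral_2_eq_2)
    show ?thesis
      using assms unfolding ab Z_bracket_def Z_coeff_def i_def j_def sum2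
      by (cases "A < n"; cases "B < n"; cases "\<alpha> = 0"; cases "\<beta> = 0")
        (simp_all add: X_bracket_simps X_bracket_simps[unfolded One_nat_def numeral_2_eq_2])
  qed
  finally show ?thesis .
qed

lemma Zf_commutator:
  assumes \<Omega>: "heis_domain n \<Omega>" and f: "smooth_on n \<Omega> f" and p: "p \<in> \<Omega>"
    and AB: "A < 2*n" "B < 2*n" and \<alpha>\<beta>: "\<alpha> \<in> {0,1}" "\<beta> \<in> {0,1}"
  shows "Zf n A \<alpha> (Zf n B \<beta> f) p - Zf n B \<beta> (Zf n A \<alpha> f) p
       = Z_bracket n A \<alpha> B \<beta> * pd 0 f p"
proof -
  let ?k = "\<lambda>m. Z_index n A \<alpha> + m" and ?l = "\<lambda>m'. Z_index n B \<beta> + m'"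
  have "Zf n A \<alpha> (Zf n B \<beta> f) p - Zf n B \<beta> (Zf n A \<alpha> f) p
      = (\<Sum>m<2. \<Sum>m'<2. Z_coeff n A \<alpha> m * Z_coeff n B \<beta> m' *
           (Xf (?k m) (Xf (?l m') f) p - Xf (?l m') (Xf (?k m) f) p))"
    unfolding Zf_Zf[OF f p AB] Zf_Zf[OF f p AB(2,1)]
    by (subst (2) sum.swap) (simp add: sum_subtractf algebra_simps)
  also have "\<dots> = (\<Sum>m<2. \<Sum>m'<2. Z_coeff n A \<alpha> m * Z_coeff n B \<beta> m' * X_bracket (?k m) (?l m'))
                    * pd 0 f p"
    using Z_index_bounds[OF AB(1), of \<alpha>] Z_index_bounds[OF AB(2), of \<beta>]
    by (simp add: Xf_commutator[OF \<Omega> f p] sum_distrib_right mult.assoc)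
  finally show ?thesis by (simp add: Z_bracket_eq[OF AB \<alpha>\<beta>])
qed

lemma Zf_Zf_symmetrised:
  assumes \<Omega>: "heis_domain n \<Omega>" and f: "smooth_on n \<Omega> f" and p: "p \<in> \<Omega>"
    and AB: "A < 2*n" "B < 2*n" and \<alpha>\<beta>: "\<alpha> \<in> {0,1}" "\<beta> \<in> {0,1}"
  shows "Zf n A \<alpha> (Zf n B \<beta> f) p + Zf n A \<beta> (Zf n B \<alpha> f) p
       = Zf n B \<alpha> (Zf n A \<beta> f) p + Zf n B \<beta> (Zf n A \<alpha> f) p"
  using Zf_commutator[OF \<Omega> f p AB \<alpha>\<beta>] Zf_commutator[OF \<Omega> f p AB \<alpha>\<beta>(2,1)]
    Z_bracket_antisym[of n A \<alpha> B \<beta>]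
  by (simp add: algebra_simps)

definition inversions :: "nat set \<Rightarrow> nat set \<Rightarrow> nat" where
  "inversions I J = card {(i, j). i \<in> I \<and> j \<in> J \<and> j < i}"

lemma shuffle_sign_eq: "shuffle_sign I J = (-1) ^ inversions I J"
  unfolding shuffle_sign_def inversions_def by simp

lemma inversions_Un_left:
  assumes "finite I1" "finite I2" "finite J" "I1 \<inter> I2 = {}"
  shows "inversions (I1 \<union> I2) J = inversions I1 J + inversions I2 J"
proof -
  have "{(i, j). i \<in> I1 \<union> I2 \<and> j \<in> J \<and> j < i}
      = {(i, j). i \<in> I1 \<and> j \<in> J \<and> j < i} \<union> {(i, j). i \<in> I2 \<and> j \<in> J \<and> j < i}"
    by auto
  moreover have "finite {(i, j). i \<in> I \<and> j \<in> J \<and> j < i}" if "finite I" for I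
    using that assms(3) by (auto intro: finite_subset[of _ "I \<times> J"])
  ultimately show ?thesis
    unfolding inversions_def using assms by (simp add: card_Un_disjoint disjoint_iff)
qed

lemma inversions_Un_right:
  assumes "finite I" "finite J1" "finite J2" "J1 \<inter> J2 = {}"
  shows "inversions I (J1 \<union> J2) = inversions I J1 + inversions I J2"
proof -
  have "{(i, j). i \<in> I \<and> j \<in> J1 \<union> J2 \<and> j < i}
      = {(i, j). i \<in> I \<and> j \<in> J1 \<and> j < i} \<union> {(i, j). i \<in> I \<and> j \<in> J2 \<and> j < i}"
    by auto
  moreover have "finite {(i, j). i \<in> I \<and> j \<in> J \<and> j < i}" if "finite J" for J
    using that assms(1) by (auto intro: finite_subset[of _ "I \<times> J"])
  ultimately show ?thesis
    unfolding inversions_def using assms by (simp add: card_Un_disjoint disjoint_iff)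
qed

lemma inversions_singleton_left: "inversions {A} J = card {j \<in> J. j < A}"
proof -
  have "{(i, j). i \<in> {A} \<and> j \<in> J \<and> j < i} = Pair A ` {j \<in> J. j < A}" by auto
  then show ?thesis unfolding inversions_def by (simp add: card_image inj_on_def)
qed

lemma inversions_singleton_right: "inversions I {A} = card {i \<in> I. A < i}"
proof -
  have "{(i, j). i \<in> I \<and> j \<in> {A} \<and> j < i} = (\<lambda>i. (i, A)) ` {i \<in> I. A < i}" by auto
  then show ?thesis unfolding inversions_def by (simp add: card_image inj_on_def)
qed

lemma shuffle_sign_swap_pair:
  assumes "finite K" "A \<in> K" "B \<in> K" "A \<noteq> B"
  shows "shuffle_sign {A} (K - {A}) * shuffle_sign {B} (K - {A} - {B})
       = - (shuffle_sign {B} (K - {B}) * shuffle_sign {A} (K - {B} - {A}))"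
proof -
  have less: "shuffle_sign {A} (K - {A}) * shuffle_sign {B} (K - {A} - {B})
       = - (shuffle_sign {B} (K - {B}) * shuffle_sign {A} (K - {B} - {A}))"
    if "finite K" "A \<in> K" "B \<in> K" "A < B" for A B K
  proof -
    have "{j \<in> K - {A}. j < A} = {j \<in> K - {A} - {B}. j < A}" using that by auto
    moreover have "{j \<in> K - {B}. j < B} = insert A {j \<in> K - {A} - {B}. j < B}" using that by auto
    moreover have "K - {B} - {A} = K - {A} - {B}" by auto
    ultimately show ?thesis
      using that by (simp add: shuffle_sign_eq inversions_singleton_left power_add)
  qed
  show ?thesis
    using assms less[of K A B] less[of K B A] by (cases "A < B") (auto simp: algebra_simps)
qed

lemma shuffle_sign_insert:
  assumes "finite K" "A \<in> K" "I \<subseteq> K - {A}"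
  shows "shuffle_sign {A} (K - {A}) * shuffle_sign I (K - {A} - I)
       = shuffle_sign (insert A I) (K - insert A I) * shuffle_sign {A} I"
proof -
  have "finite I" using assms finite_subset by blast
  have "insert A I = {A} \<union> I" "K - insert A I = K - {A} - I" by auto
  then have "inversions (insert A I) (K - insert A I) = inversions ({A} \<union> I) (K - {A} - I)"
    by simp
  also have "\<dots> = inversions {A} (K - {A} - I) + inversions I (K - {A} - I)"
    using \<open>finite I\<close> assms by (intro inversions_Un_left) auto
  finally have left: "inversions (insert A I) (K - insert A I) = \<dots>" .
  have "K - {A} = (K - {A} - I) \<union> I" using assms(3) by auto
  then have "inversions {A} (K - {A}) = inversions {A} ((K - {A} - I) \<union> I)"
    by simp
  also have "\<dots> = inversions {A} (K - {A} - I) + inversions {A} I"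
    using \<open>finite I\<close> assms by (intro inversions_Un_right) auto
  finally have right: "inversions {A} (K - {A}) = \<dots>" .
  show ?thesis by (simp add: shuffle_sign_eq left right power_add)
qed

lemma shuffle_sign_move_past:
  assumes "finite K" "I \<subseteq> K" "A \<in> K - I"
  shows "shuffle_sign {A} (K - {A}) * shuffle_sign I (K - {A} - I)
       = (-1) ^ card I * (shuffle_sign I (K - I) * shuffle_sign {A} (K - I - {A}))"
proof -
  have "finite I" using assms finite_subset by blast
  have "K - I = (K - {A} - I) \<union> {A}" using assms by auto
  then have "inversions I (K - I) = inversions I ((K - {A} - I) \<union> {A})"
    by simp
  also have "\<dots> = inversions I (K - {A} - I) + card {i \<in> I. A < i}"
    using \<open>finite I\<close> assms
    by (subst inversions_Un_right) (auto simp: inversions_singleton_right)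
  finally have I_moved: "inversions I (K - I) = \<dots>" .
  have "K - {A} = (K - I - {A}) \<union> I" using assms by auto
  then have "inversions {A} (K - {A}) = inversions {A} ((K - I - {A}) \<union> I)"
    by simp
  also have "\<dots> = inversions {A} (K - I - {A}) + card {i \<in> I. i < A}"
    using \<open>finite I\<close> assms by (subst inversions_Un_right) (auto simp: inversions_singleton_left)
  finally have A_moved: "inversions {A} (K - {A}) = \<dots>" .
  have "card I = card ({i \<in> I. i < A} \<union> {i \<in> I. A < i})"
    using assms by (intro arg_cong[where f = card]) (fastforce simp: linorder_not_less le_less)
  also have "\<dots> = card {i \<in> I. i < A} + card {i \<in> I. A < i}"
    using \<open>finite I\<close> by (intro card_Un_disjoint) auto
  finally have "card I + inversions I (K - I) + inversions {A} (K - I - {A})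
      = inversions {A} (K - {A}) + inversions I (K - {A} - I) + 2 * card {i \<in> I. A < i}"
    by (simp add: I_moved A_moved)
  then have "(-1::complex) ^ (card I + inversions I (K - I) + inversions {A} (K - I - {A}))
      = (-1) ^ (inversions {A} (K - {A}) + inversions I (K - {A} - I))"
    by (simp add: power_add power_mult)
  then show ?thesis by (simp add: shuffle_sign_eq power_add mult.assoc)
qed

lemma sum_pairs_antisym_eq_0:
  fixes h :: "'a \<Rightarrow> 'a \<Rightarrow> 'b::real_vector"
  assumes "finite K" "\<And>A B. A \<in> K \<Longrightarrow> B \<in> K \<Longrightarrow> A \<noteq> B \<Longrightarrow> h A B = - h B A"
  shows "(\<Sum>A\<in>K. \<Sum>B\<in>K - {A}. h A B) = 0" (is "?S = 0")
proof -
  have "?S = (\<Sum>A\<in>K. \<Sum>B\<in>{B. B \<in> K \<and> A \<noteq> B}. h A B)"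
    by (intro sum.cong) auto
  also have "\<dots> = (\<Sum>B\<in>K. \<Sum>A\<in>{A. A \<in> K \<and> A \<noteq> B}. h A B)"
    by (rule sum.swap_restrict) (use assms(1) in auto)
  also have "\<dots> = (\<Sum>B\<in>K. \<Sum>A\<in>K - {B}. - h B A)"
    using assms(2) by (intro sum.cong) auto
  finally have "?S = - ?S" by (simp add: sum_negf)
  then have "2 *\<^sub>R ?S = 0" by (simp add: scaleR_2 eq_neg_iff_add_eq_0)
  then show ?thesis by simp
qed

lemma dop_outside: "\<not> K \<subseteq> {..<2*n} \<Longrightarrow> dop n \<alpha> F K x = 0"
  by (simp add: dop_def)

lemma dop_dop_eq:
  assumes F: "\<And>I. smooth_on n \<Omega> (F I)" and x: "x \<in> \<Omega>" and K: "K \<subseteq> {..<2*n}"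
  shows "dop n \<alpha> (dop n \<beta> F) K x = (\<Sum>A\<in>K. \<Sum>B\<in>K - {A}.
     shuffle_sign {A} (K - {A}) * shuffle_sign {B} (K - {A} - {B})
       * Zf n A \<alpha> (Zf n B \<beta> (F (K - {A} - {B}))) x)"
proof -
  have "finite K" using K finite_subset by blast
  have "Zf n A \<alpha> (dop n \<beta> F (K - {A})) x = (\<Sum>B\<in>K - {A}.
      shuffle_sign {B} (K - {A} - {B}) * Zf n A \<alpha> (Zf n B \<beta> (F (K - {A} - {B}))) x)"
    if "A \<in> K" for A
  proof -
    have "K - {A} \<subseteq> {..<2*n}" using K by auto
    then have "dop n \<beta> F (K - {A}) =
        (\<lambda>q. \<Sum>B\<in>K - {A}. shuffle_sign {B} (K - {A} - {B}) * Zf n B \<beta> (F (K - {A} - {B})) q)"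
      unfolding dop_def by simp
    moreover have "has_partials n x (Zf n B \<beta> (F (K - {A} - {B})))" if "B \<in> K - {A}" for B
      using that K smooth_on_has_partials[OF F x, of "[_]"] by (intro has_partials_Zf) auto
    moreover have "A < 2*n" using K \<open>A \<in> K\<close> by auto
    ultimately show ?thesis
      using \<open>finite K\<close> by (simp only:) (rule Zf_sum, auto)
  qed
  then show ?thesis
    unfolding dop_def[of n \<alpha>] using K by (simp add: sum_distrib_left mult.assoc)
qed

lemma dop_anticommute:
  assumes \<Omega>: "heis_domain n \<Omega>" and F: "\<And>I. smooth_on n \<Omega> (F I)" and x: "x \<in> \<Omega>"
    and \<alpha>\<beta>: "\<alpha> \<in> {0,1}" "\<beta> \<in> {0,1}"
  shows "dop n \<alpha> (dop n \<beta> F) K x + dop n \<beta> (dop n \<alpha> F) K x = 0"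
proof (cases "K \<subseteq> {..<2*n}")
  case K: True
  have "finite K" using K finite_subset by blast
  define \<sigma> where "\<sigma> A B = shuffle_sign {A} (K - {A}) * shuffle_sign {B} (K - {A} - {B})" for A B
  define T where "T A B = Zf n A \<alpha> (Zf n B \<beta> (F (K - {A} - {B}))) x
                        + Zf n A \<beta> (Zf n B \<alpha> (F (K - {A} - {B}))) x" for A B
  have "dop n \<alpha> (dop n \<beta> F) K x + dop n \<beta> (dop n \<alpha> F) K x = (\<Sum>A\<in>K. \<Sum>B\<in>K - {A}. \<sigma> A B * T A B)"
    unfolding dop_dop_eq[OF F x K] \<sigma>_def T_def by (simp add: sum.distrib[symmetric] algebra_simps)
  also have "\<dots> = 0"
  proof (rule sum_pairs_antisym_eq_0[OF \<open>finite K\<close>])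
    fix A B assume AB: "A \<in> K" "B \<in> K" "A \<noteq> B"
    have "K - {B} - {A} = K - {A} - {B}" by auto
    have "T A B = T B A"
      unfolding T_def \<open>K - {B} - {A} = K - {A} - {B}\<close> using AB K
      by (intro Zf_Zf_symmetrised[OF \<Omega> F x _ _ \<alpha>\<beta>]) auto
    moreover have "\<sigma> A B = - \<sigma> B A"
      unfolding \<sigma>_def by (rule shuffle_sign_swap_pair[OF \<open>finite K\<close> AB])
    ultimately show "\<sigma> A B * T A B = - (\<sigma> B A * T B A)" by simp
  qed
  finally show ?thesis .
qed (simp add: dop_outside)

lemma wedge_outside:
  assumes "\<not> K \<subseteq> {..<2*n}"
    and "\<And>I. \<not> I \<subseteq> {..<2*n} \<Longrightarrow> F I x = 0" "\<And>J. \<not> J \<subseteq> {..<2*n} \<Longrightarrow> G J x = 0"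
  shows "wedge F G K x = 0"
  unfolding wedge_def
proof (intro sum.neutral ballI)
  fix I assume "I \<in> Pow K"
  show "shuffle_sign I (K - I) * F I x * G (K - I) x = 0"
  proof (cases "I \<subseteq> {..<2*n}")
    case True
    then have "\<not> K - I \<subseteq> {..<2*n}" using assms(1) by auto
    then show ?thesis using assms(3) by simp
  qed (simp add: assms(2))
qed

lemma wedge_dop_left:
  assumes K: "K \<subseteq> {..<2*n}"
  shows "wedge (dop n \<alpha> F) G K x = (\<Sum>A\<in>K. \<Sum>I\<in>Pow (K - {A}).
     shuffle_sign {A} (K - {A}) * shuffle_sign I (K - {A} - I)
       * (Zf n A \<alpha> (F I) x * G (K - {A} - I) x))"
proof -
  have "finite K" using K finite_subset by blast
  define h where "h J A = shuffle_sign J (K - J) *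
      (shuffle_sign {A} (J - {A}) * (Zf n A \<alpha> (F (J - {A})) x * G (K - J) x))" for J A
  have "wedge (dop n \<alpha> F) G K x = (\<Sum>J\<in>Pow K. \<Sum>A\<in>{A. A \<in> K \<and> A \<in> J}. h J A)"
    unfolding wedge_def
  proof (intro sum.cong refl)
    fix J assume J: "J \<in> Pow K"
    then have "{A. A \<in> K \<and> A \<in> J} = J" "J \<subseteq> {..<2*n}" using K by auto
    then show "shuffle_sign J (K - J) * dop n \<alpha> F J x * G (K - J) x
        = (\<Sum>A\<in>{A. A \<in> K \<and> A \<in> J}. h J A)"
      unfolding h_def dop_def by (simp add: sum_distrib_left sum_distrib_right mult.assoc)
  qed
  also have "\<dots> = (\<Sum>A\<in>K. \<Sum>J\<in>{J. J \<in> Pow K \<and> A \<in> J}. h J A)"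
    by (rule sum.swap_restrict) (use \<open>finite K\<close> in auto)
  also have "\<dots> = (\<Sum>A\<in>K. \<Sum>I\<in>Pow (K - {A}). h (insert A I) A)"
  proof (rule sum.cong[OF refl])
    fix A assume "A \<in> K"
    then have "bij_betw (insert A) (Pow (K - {A})) {J. J \<in> Pow K \<and> A \<in> J}"
      by (intro bij_betw_byWitness[where f' = "\<lambda>J. J - {A}"]) auto
    then show "(\<Sum>J\<in>{J. J \<in> Pow K \<and> A \<in> J}. h J A) = (\<Sum>I\<in>Pow (K - {A}). h (insert A I) A)"
      by (rule sum.reindex_bij_betw[symmetric])
  qed
  also have "\<dots> = (\<Sum>A\<in>K. \<Sum>I\<in>Pow (K - {A}).
      shuffle_sign {A} (K - {A}) * shuffle_sign I (K - {A} - I) * (Zf n A \<alpha> (F I) x * G (K - {A} - I) x))"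
  proof (intro sum.cong refl)
    fix A I assume "A \<in> K" "I \<in> Pow (K - {A})"
    then have "insert A I - {A} = I" "K - insert A I = K - {A} - I" by auto
    then show "h (insert A I) A = shuffle_sign {A} (K - {A}) * shuffle_sign I (K - {A} - I) *
        (Zf n A \<alpha> (F I) x * G (K - {A} - I) x)"
      unfolding h_def using shuffle_sign_insert[OF \<open>finite K\<close> \<open>A \<in> K\<close>, of I] \<open>I \<in> Pow (K - {A})\<close>
      by (simp add: mult.assoc)
  qed
  finally show ?thesis .
qed

lemma wedge_dop_right:
  assumes K: "K \<subseteq> {..<2*n}" and F: "\<And>I. card I \<noteq> p \<Longrightarrow> F I x = 0"
  shows "(-1) ^ p * wedge F (dop n \<alpha> G) K x = (\<Sum>A\<in>K. \<Sum>I\<in>Pow (K - {A}).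
     shuffle_sign {A} (K - {A}) * shuffle_sign I (K - {A} - I)
       * (F I x * Zf n A \<alpha> (G (K - {A} - I)) x))"
proof -
  have "finite K" using K finite_subset by blast
  define g where "g I A = shuffle_sign I (K - I) *
      (F I x * (shuffle_sign {A} (K - I - {A}) * Zf n A \<alpha> (G (K - I - {A})) x))" for I A
  have "wedge F (dop n \<alpha> G) K x = (\<Sum>I\<in>Pow K. \<Sum>A\<in>{A. A \<in> K \<and> A \<notin> I}. g I A)"
    unfolding wedge_def
  proof (intro sum.cong refl)
    fix I assume "I \<in> Pow K"
    have "{A. A \<in> K \<and> A \<notin> I} = K - I" "K - I \<subseteq> {..<2*n}" using K by auto
    then show "shuffle_sign I (K - I) * F I x * dop n \<alpha> G (K - I) x
        = (\<Sum>A\<in>{A. A \<in> K \<and> A \<notin> I}. g I A)"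
      unfolding g_def dop_def by (simp add: sum_distrib_left mult.assoc)
  qed
  also have "\<dots> = (\<Sum>A\<in>K. \<Sum>I\<in>{I. I \<in> Pow K \<and> A \<notin> I}. g I A)"
    by (rule sum.swap_restrict) (use \<open>finite K\<close> in auto)
  also have "\<dots> = (\<Sum>A\<in>K. \<Sum>I\<in>Pow (K - {A}). g I A)"
    by (intro sum.cong refl) auto
  finally have "wedge F (dop n \<alpha> G) K x = \<dots>" .
  moreover have "(-1) ^ p * g I A = shuffle_sign {A} (K - {A}) * shuffle_sign I (K - {A} - I) *
      (F I x * Zf n A \<alpha> (G (K - {A} - I)) x)" if "A \<in> K" "I \<in> Pow (K - {A})" for A I
  proof (cases "card I = p")
    case True
    have "K - I - {A} = K - {A} - I" by auto
    moreover have "I \<subseteq> K" "A \<in> K - I" using that by auto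
    ultimately show ?thesis
      unfolding g_def using shuffle_sign_move_past[OF \<open>finite K\<close>, of I A] True
      by (simp add: mult.assoc mult.left_commute)
  qed (simp add: g_def F)
  ultimately show ?thesis by (simp add: sum_distrib_left)
qed

lemma dop_wedge_eq:
  assumes F: "\<And>I. smooth_on n \<Omega> (F I)" and G: "\<And>J. smooth_on n \<Omega> (G J)"
    and x: "x \<in> \<Omega>" and K: "K \<subseteq> {..<2*n}"
  shows "dop n \<alpha> (wedge F G) K x =
     (\<Sum>A\<in>K. \<Sum>I\<in>Pow (K - {A}). shuffle_sign {A} (K - {A}) * shuffle_sign I (K - {A} - I) *
        (Zf n A \<alpha> (F I) x * G (K - {A} - I) x))
   + (\<Sum>A\<in>K. \<Sum>I\<in>Pow (K - {A}). shuffle_sign {A} (K - {A}) * shuffle_sign I (K - {A} - I) *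
        (F I x * Zf n A \<alpha> (G (K - {A} - I)) x))"
proof -
  have "finite K" using K finite_subset by blast
  have partials: "has_partials n x (F I)" "has_partials n x (G J)" for I J
    using smooth_on_has_partials[OF F x, of "[]"] smooth_on_has_partials[OF G x, of "[]"] by auto
  have "Zf n A \<alpha> (wedge F G (K - {A})) x = (\<Sum>I\<in>Pow (K - {A}). shuffle_sign I (K - {A} - I) *
      (Zf n A \<alpha> (F I) x * G (K - {A} - I) x + F I x * Zf n A \<alpha> (G (K - {A} - I)) x))"
    if "A \<in> K" for A
  proof -
    have "A < 2*n" using that K by auto
    have "wedge F G (K - {A}) =
        (\<lambda>y. \<Sum>I\<in>Pow (K - {A}). shuffle_sign I (K - {A} - I) * (F I y * G (K - {A} - I) y))"
      unfolding wedge_def by (simp add: mult.assoc)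
    then have "Zf n A \<alpha> (wedge F G (K - {A})) x = (\<Sum>I\<in>Pow (K - {A}).
        shuffle_sign I (K - {A} - I) * Zf n A \<alpha> (\<lambda>y. F I y * G (K - {A} - I) y) x)"
      using \<open>finite K\<close> \<open>A < 2*n\<close> partials
      by (simp only:) (rule Zf_sum, auto intro: has_partials_mult)
    then show ?thesis
      using \<open>A < 2*n\<close> partials by (simp add: Zf_mult)
  qed
  then show ?thesis
    unfolding dop_def[of n \<alpha> "wedge F G"] using K
    by (simp add: sum_distrib_left sum.distrib[symmetric] algebra_simps)
qed

lemma smooth_form_smooth_on: "smooth_form n \<Omega> q F \<Longrightarrow> smooth_on n \<Omega> (F I)"
  unfolding smooth_form_def by blast

lemma smooth_form_eq_0: "smooth_form n \<Omega> q F \<Longrightarrow> \<not> (I \<subseteq> {..<2*n} \<and> card I = q) \<Longrightarrow> F I x = 0"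
  unfolding smooth_form_def by (metis (mono_tags))

lemma dop_wedge:
  assumes F: "smooth_form n \<Omega> p F" and G: "smooth_form n \<Omega> q G" and x: "x \<in> \<Omega>"
  shows "dop n \<alpha> (wedge F G) K x = wedge (dop n \<alpha> F) G K x + (-1) ^ p * wedge F (dop n \<alpha> G) K x"
proof (cases "K \<subseteq> {..<2*n}")
  case True
  have "F I x = 0" if "card I \<noteq> p" for I
    using smooth_form_eq_0[OF F] that by blast
  then show ?thesis
    using dop_wedge_eq[OF smooth_form_smooth_on[OF F] smooth_form_smooth_on[OF G] x True]
    by (simp add: wedge_dop_left[OF True] wedge_dop_right[OF True])
next
  case False
  have "F I x = 0" "G I x = 0" if "\<not> I \<subseteq> {..<2*n}" for I
    using smooth_form_eq_0[OF F] smooth_form_eq_0[OF G] that by blast+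
  then have "wedge (dop n \<alpha> F) G K x = 0" "wedge F (dop n \<alpha> G) K x = 0"
    by (intro wedge_outside[OF False]; simp add: dop_outside)+
  then show ?thesis using False by (simp add: dop_outside)
qed

theorem proposition1p1:
  fixes n :: nat and \<Omega> :: "(nat \<Rightarrow> real) set" and \<alpha> :: nat
  assumes "heis_domain n \<Omega>" and "\<alpha> \<in> {0, 1}"
  shows "(\<forall>q F. smooth_form n \<Omega> q F \<longrightarrow>
            (\<forall>K. \<forall>x\<in>\<Omega>. dop n 0 (dop n 0 F) K x = 0 \<and> dop n 1 (dop n 1 F) K x = 0))
       \<and> (\<forall>q F. smooth_form n \<Omega> q F \<longrightarrow>
            (\<forall>K. \<forall>x\<in>\<Omega>. dop n 0 (dop n 1 F) K x = - dop n 1 (dop n 0 F) K x))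
       \<and> (\<forall>p q F G. smooth_form n \<Omega> p F \<longrightarrow> smooth_form n \<Omega> q G \<longrightarrow>
            (\<forall>K. \<forall>x\<in>\<Omega>. dop n \<alpha> (wedge F G) K x
                 = wedge (dop n \<alpha> F) G K x + (-1) ^ p * wedge F (dop n \<alpha> G) K x))"
proof (intro conjI allI impI ballI)
  fix q F K x assume F: "smooth_form n \<Omega> q F" and x: "x \<in> \<Omega>"
  have anticommute: "dop n \<beta> (dop n \<gamma> F) K x + dop n \<gamma> (dop n \<beta> F) K x = 0"
    if "\<beta> \<in> {0, 1}" "\<gamma> \<in> {0, 1}" for \<beta> \<gamma>
    by (rule dop_anticommute[OF assms(1) smooth_form_smooth_on[OF F] x that])
  show "dop n 0 (dop n 0 F) K x = 0" "dop n 1 (dop n 1 F) K x = 0"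
    using anticommute[of 0 0] anticommute[of 1 1] by simp_all
  show "dop n 0 (dop n 1 F) K x = - dop n 1 (dop n 0 F) K x"
    using anticommute[of 0 1] by (simp add: eq_neg_iff_add_eq_0)
next
  fix p q F G K x assume "smooth_form n \<Omega> p F" "smooth_form n \<Omega> q G" "x \<in> \<Omega>"
  then show "dop n \<alpha> (wedge F G) K x = wedge (dop n \<alpha> F) G K x + (-1) ^ p * wedge F (dop n \<alpha> G) K x"
    by (rule dop_wedge)
qed

end
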